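(* In any execution of the algorithm described in the context on a camera object $S$ and an associated versioned CAS object $O$ (after $O$'s constructor has completed), in every configuration the only VNode in the version list of $O$ that can have an invalid timestamp is the head of the version list.
   Context: Camera $S$ has an integer field timestamp, initially 0; takeSnapshot(): read $t:=S.\mathit{timestamp}$, perform CAS$(S.\mathit{timestamp},t,t+1)$, return $t$. A VNode has fields val and nextv (both immutable after creation) and ts (an integer or special value TBD, initially TBD). Versioned CAS object $O$ has a field $\mathit{VHead}$. Constructor with value $v$: $\mathit{VHead}:=$ new VNode(val $v$, nextv NULL); initTS($\mathit{VHead}$). initTS($n$): if $n.ts=$TBD, read $c:=S.\mathit{timestamp}$ and CAS$(n.ts,\mathrm{TBD},c)$. readSnapshot($ts$): $node:=\mathit{VHead}$; initTS($node$); while $node.ts>ts$, $node:=node.nextv$; return $node.val$. vRead(): $h:=\mathit{VHead}$; initTS($h$); return $h.val$. vCAS(oldV,newV): $h:=\mathit{VHead}$; initTS($h$); if $h.val\neq$ oldV return false; if newV $=$ oldV return true; $m:=$ new VNode(val newV, nextv $h$); if CAS$(\mathit{VHead},h,m)$ succeeds, initTS($m$) and return true; else delete $m$, call initTS on the current value of $\mathit{VHead}$, return false. The version list of $O$ is obtained by starting at the VNode pointed to by $\mathit{VHead}$ and following nextv pointers; its head is the VNode pointed to by $\mathit{VHead}$. A VNode's timestamp is valid in a configuration if its ts field is not TBD there, and invalid otherwise. *)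

theory Defs
  imports Main
begin

(* Interleaving model of the camera S and versioned CAS object O.
   Timestamps are integers; ts = None encodes TBD.  VNodes live in a heap
   indexed by nat (node "addresses"); NULL nextv is None. *)

record 'v vnode =
  vval  :: 'v
  vnext :: "nat option"
  vts   :: "int option"

(* what to do after initTS(n) finishes *)
datatype 'v after =
    AfterVRead            (* vRead: return n.val *)
  | AfterRS int           (* readSnapshot(ts): start traversal at n *)
  | AfterVCAS 'v 'v       (* vCAS(oldV,newV): continue with h = n *)
  | AfterDone

(* local program counter of a process; each transition performs at most
   one shared-memory access (read / write / CAS / allocation) *)
datatype 'v pc =
    Idle
  | Snap_Read
  | Snap_CAS int
  | Head_Read "'v after"
  | Init_ReadTS nat "'v after"
  | Init_ReadCam nat "'v after"
  | Init_CAS nat int "'v after"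
  | RS_Loop int nat
  | VCAS_Check 'v 'v nat
  | VCAS_CAS nat nat
  | VCAS_FailRead

record ('p, 'v) conf =
  cam   :: int                       (* S.timestamp *)
  vhead :: nat
  heap  :: "nat \<Rightarrow> 'v vnode option"
  pcs   :: "'p \<Rightarrow> 'v pc"

definition setpc :: "('p, 'v) conf \<Rightarrow> 'p \<Rightarrow> 'v pc \<Rightarrow> ('p, 'v) conf" where
  "setpc c p x = c\<lparr>pcs := (pcs c)(p := x)\<rparr>"

fun cont :: "nat \<Rightarrow> 'v after \<Rightarrow> 'v pc" where
  "cont n AfterVRead = Idle"
| "cont n (AfterRS t) = RS_Loop t n"
| "cont n (AfterVCAS ov nv) = VCAS_Check ov nv n"
| "cont n AfterDone = Idle"

(* one iteration of the readSnapshot loop: read node.ts (and the immutable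
   node.nextv); continue while node.ts > ts, otherwise return node.val *)
fun rs_next :: "int \<Rightarrow> 'v vnode option \<Rightarrow> 'v pc" where
  "rs_next t (Some nd) =
     (case vts nd of
        Some x \<Rightarrow> (if x > t then (case vnext nd of Some m \<Rightarrow> RS_Loop t m | None \<Rightarrow> Idle) else Idle)
      | None \<Rightarrow> Idle)"
| "rs_next t None = Idle"

inductive pstep :: "'p \<Rightarrow> ('p, 'v) conf \<Rightarrow> ('p, 'v) conf \<Rightarrow> bool" where
  inv_snap: "pcs c p = Idle \<Longrightarrow> pstep p c (setpc c p Snap_Read)"
| inv_vread: "pcs c p = Idle \<Longrightarrow> pstep p c (setpc c p (Head_Read AfterVRead))"
| inv_rs: "pcs c p = Idle \<Longrightarrow> pstep p c (setpc c p (Head_Read (AfterRS t)))"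
| inv_vcas: "pcs c p = Idle \<Longrightarrow> pstep p c (setpc c p (Head_Read (AfterVCAS ov nv)))"
| snap_read: "pcs c p = Snap_Read \<Longrightarrow> pstep p c (setpc c p (Snap_CAS (cam c)))"
| snap_cas_ok: "pcs c p = Snap_CAS t \<Longrightarrow> cam c = t \<Longrightarrow>
     pstep p c ((setpc c p Idle)\<lparr>cam := t + 1\<rparr>)"
| snap_cas_fail: "pcs c p = Snap_CAS t \<Longrightarrow> cam c \<noteq> t \<Longrightarrow> pstep p c (setpc c p Idle)"
| head_read: "pcs c p = Head_Read k \<Longrightarrow> pstep p c (setpc c p (Init_ReadTS (vhead c) k))"
| init_valid: "pcs c p = Init_ReadTS n k \<Longrightarrow> vts (the (heap c n)) \<noteq> None \<Longrightarrow>
     pstep p c (setpc c p (cont n k))"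
| init_tbd: "pcs c p = Init_ReadTS n k \<Longrightarrow> vts (the (heap c n)) = None \<Longrightarrow>
     pstep p c (setpc c p (Init_ReadCam n k))"
| init_readcam: "pcs c p = Init_ReadCam n k \<Longrightarrow> pstep p c (setpc c p (Init_CAS n (cam c) k))"
| init_cas: "pcs c p = Init_CAS n t k \<Longrightarrow>
     pstep p c ((setpc c p (cont n k))\<lparr>heap := (heap c)(n :=
        map_option (\<lambda>nd. if vts nd = None then nd\<lparr>vts := Some t\<rparr> else nd) (heap c n))\<rparr>)"
| rs_loop: "pcs c p = RS_Loop t n \<Longrightarrow> pstep p c (setpc c p (rs_next t (heap c n)))"
| vcas_ret: "pcs c p = VCAS_Check ov nv h \<Longrightarrow> vval (the (heap c h)) \<noteq> ov \<or> nv = ov \<Longrightarrow>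
     pstep p c (setpc c p Idle)"
| vcas_alloc: "pcs c p = VCAS_Check ov nv h \<Longrightarrow> vval (the (heap c h)) = ov \<Longrightarrow> nv \<noteq> ov \<Longrightarrow>
     heap c m = None \<Longrightarrow>
     pstep p c ((setpc c p (VCAS_CAS h m))\<lparr>heap := (heap c)(m \<mapsto>
        \<lparr>vval = nv, vnext = Some h, vts = None\<rparr>)\<rparr>)"
| vcas_cas_ok: "pcs c p = VCAS_CAS h m \<Longrightarrow> vhead c = h \<Longrightarrow>
     pstep p c ((setpc c p (Init_ReadTS m AfterDone))\<lparr>vhead := m\<rparr>)"
| vcas_cas_fail: "pcs c p = VCAS_CAS h m \<Longrightarrow> vhead c \<noteq> h \<Longrightarrow>
     pstep p c ((setpc c p VCAS_FailRead)\<lparr>heap := (heap c)(m := None)\<rparr>)"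
| vcas_failread: "pcs c p = VCAS_FailRead \<Longrightarrow>
     pstep p c (setpc c p (Init_ReadTS (vhead c) AfterDone))"

(* configurations right after O's constructor has completed: VHead points to
   the single node created by the constructor, whose ts has been initialised;
   other processes may be idle or in the middle of takeSnapshot *)
definition initial :: "('p, 'v) conf \<Rightarrow> bool" where
  "initial c \<longleftrightarrow> (\<exists>n0 v t. vhead c = n0 \<and>
      heap c = [n0 \<mapsto> \<lparr>vval = v, vnext = None, vts = Some t\<rparr>] \<and>
      (\<forall>p. pcs c p = Idle \<or> pcs c p = Snap_Read \<or> (\<exists>t'. pcs c p = Snap_CAS t')))"

inductive reach :: "('p, 'v) conf \<Rightarrow> bool" where
  reach_init: "initial c \<Longrightarrow> reach c"
| reach_step: "reach c \<Longrightarrow> pstep p c c' \<Longrightarrow> reach c'"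

inductive_set vlist :: "('p, 'v) conf \<Rightarrow> nat set" for c where
  vl_head: "vhead c \<in> vlist c"
| vl_next: "n \<in> vlist c \<Longrightarrow> heap c n = Some nd \<Longrightarrow> vnext nd = Some m \<Longrightarrow> m \<in> vlist c"

end

theory Submission
  imports Defs
begin

(* The invariant behind the lemma: a vCAS only swings VHead from h to its new node m after
   initTS(h) has returned, so at that moment h already carries a valid timestamp, and h is
   the only node that moves from head position into the body of the list.  Timestamps, once
   valid, never become TBD again, and nodes of the list are never modified or freed, since the
   only node a vCAS allocates or frees is its own pending node, which is not in the list. *)

lemma vlist_cong:
  assumes head: "vhead c' = vhead c"
    and nextv: "\<forall>n\<in>vlist c. map_option vnext (heap c' n) = map_option vnext (heap c n)"
  shows "vlist c' = vlist c"
proof (intro equalityI subsetI)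
  fix x assume "x \<in> vlist c'"
  then show "x \<in> vlist c"
  proof (induction rule: vlist.induct)
    case vl_head
    then show ?case using head vlist.vl_head by simp
  next
    case (vl_next n nd m)
    then obtain nd' where "heap c n = Some nd'" "vnext nd' = Some m"
      using nextv by (cases "heap c n") auto
    then show ?case using vl_next vlist.vl_next by blast
  qed
next
  fix x assume "x \<in> vlist c"
  then show "x \<in> vlist c'"
  proof (induction rule: vlist.induct)
    case vl_head
    then show ?case using head vlist.vl_head by metis
  next
    case (vl_next n nd m)
    then obtain nd' where "heap c' n = Some nd'" "vnext nd' = Some m"
      using nextv by (cases "heap c' n") auto
    then show ?case using vl_next vlist.vl_next by blast
  qed
qed

lemma vlist_push:
  assumes "vhead c' = m" and "heap c' = heap c"
    and "heap c m = Some nd" and "vnext nd = Some (vhead c)"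
  shows "vlist c' = insert m (vlist c)"
proof (intro equalityI subsetI)
  fix x assume "x \<in> vlist c'"
  then show "x \<in> insert m (vlist c)"
  proof (induction rule: vlist.induct)
    case vl_head
    then show ?case using assms by simp
  next
    case (vl_next n nd' k)
    then show ?case using assms vlist.vl_head vlist.vl_next by fastforce
  qed
next
  have "m \<in> vlist c'"
    using assms vlist.vl_head by metis
  moreover have "x \<in> vlist c'" if "x \<in> vlist c" for x
    using that
  proof (induction rule: vlist.induct)
    case vl_head
    then show ?case using assms \<open>m \<in> vlist c'\<close> vlist.vl_next by metis
  next
    case (vl_next n nd' k)
    then show ?case using assms vlist.vl_next by metis
  qed
  ultimately show "x \<in> vlist c'" if "x \<in> insert m (vlist c)" for x
    using that by blast
qed

lemma vlist_singleton:
  assumes "heap c = [vhead c \<mapsto> \<lparr>vval = v, vnext = None, vts = Some t\<rparr>]"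
  shows "vlist c = {vhead c}"
proof (intro equalityI subsetI)
  fix x assume "x \<in> vlist c"
  then show "x \<in> {vhead c}"
    by (induction rule: vlist.induct) (use assms in \<open>auto split: if_splits\<close>)
qed (simp add: vlist.vl_head)

lemma setpc_simps [simp]:
  "vhead (setpc c p x) = vhead c" "heap (setpc c p x) = heap c" "cam (setpc c p x) = cam c"
  "pcs (setpc c p x) q = (if q = p then x else pcs c q)"
  by (auto simp: setpc_def)

lemma vlist_setpc [simp]: "vlist (setpc c p x) = vlist c"
  by (rule vlist_cong) auto

fun init_target :: "'v pc \<Rightarrow> nat option" where
  "init_target (Init_ReadTS n k) = Some n"
| "init_target (Init_ReadCam n k) = Some n"
| "init_target (Init_CAS n t k) = Some n"
| "init_target _ = None"

lemma init_target_cont [simp]: "init_target (cont n k) = None"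
  by (cases k) auto

lemma cont_eq_VCAS_Check_iff [simp]:
  "cont n k = VCAS_Check ov nv h \<longleftrightarrow> h = n \<and> k = AfterVCAS ov nv"
  by (cases k) auto

lemma cont_neq_VCAS_CAS [simp]: "cont n k \<noteq> VCAS_CAS h m"
  by (cases k) auto

lemma rs_next_cases: "rs_next t x = Idle \<or> (\<exists>m. rs_next t x = RS_Loop t m)"
  by (cases x) (auto split: option.splits)

lemma rs_next_simps [simp]:
  "init_target (rs_next t x) = None" "rs_next t x \<noteq> VCAS_Check ov nv h"
  "rs_next t x \<noteq> VCAS_CAS h m"
  using rs_next_cases[of t x] by auto

definition valid_node :: "('p, 'v) conf \<Rightarrow> nat \<Rightarrow> bool" where
  "valid_node c n \<longleftrightarrow> (\<exists>nd. heap c n = Some nd \<and> vts nd \<noteq> None)"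

text \<open>The node \<open>m\<close> allocated by a vCAS that is about to swing VHead away from \<open>h\<close>.\<close>

definition pending_node :: "('p, 'v) conf \<Rightarrow> nat \<Rightarrow> nat \<Rightarrow> bool" where
  "pending_node c h m \<longleftrightarrow> m \<notin> vlist c \<and>
     (\<exists>nd. heap c m = Some nd \<and> vnext nd = Some h \<and> vts nd = None)"

text \<open>The third conjunct keeps initTS from stamping a pending node, the last one keeps the
  CAS of one vCAS from publishing or freeing the pending node of another.\<close>

definition vcas_inv :: "('p, 'v) conf \<Rightarrow> bool" where
  "vcas_inv c \<longleftrightarrow>
    (\<forall>n\<in>vlist c. heap c n \<noteq> None) \<and>
    (\<forall>n\<in>vlist c. n \<noteq> vhead c \<longrightarrow> valid_node c n) \<and>
    (\<forall>p n. init_target (pcs c p) = Some n \<longrightarrow> n \<in> vlist c) \<and>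
    (\<forall>p ov nv h. pcs c p = VCAS_Check ov nv h \<longrightarrow> valid_node c h) \<and>
    (\<forall>p h m. pcs c p = VCAS_CAS h m \<longrightarrow> valid_node c h \<and> pending_node c h m) \<and>
    (\<forall>p q h m h' m'. pcs c p = VCAS_CAS h m \<longrightarrow> pcs c q = VCAS_CAS h' m' \<longrightarrow> p \<noteq> q \<longrightarrow> m \<noteq> m')"

lemma vcas_inv_init_target_in_vlist:
  "vcas_inv c \<Longrightarrow> init_target (pcs c p) = Some n \<Longrightarrow> n \<in> vlist c"
  unfolding vcas_inv_def by blast

lemma vcas_inv_initial:
  assumes "initial c"
  shows "vcas_inv c"
proof -
  obtain v t where heap: "heap c = [vhead c \<mapsto> \<lparr>vval = v, vnext = None, vts = Some t\<rparr>]"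
    and idle: "\<And>p. pcs c p = Idle \<or> pcs c p = Snap_Read \<or> (\<exists>t'. pcs c p = Snap_CAS t')"
    using assms unfolding initial_def by blast
  have "init_target (pcs c p) = None" "pcs c p \<noteq> VCAS_Check ov nv h" "pcs c p \<noteq> VCAS_CAS h m"
    for p ov nv h m
    using idle[of p] by auto
  then show ?thesis
    using heap vlist_singleton[OF heap] unfolding vcas_inv_def by simp
qed

lemma vcas_inv_setpc:
  assumes "vcas_inv c"
    and "\<And>n. init_target x = Some n \<Longrightarrow> n \<in> vlist c"
    and "\<And>ov nv h. x = VCAS_Check ov nv h \<Longrightarrow> valid_node c h"
    and "\<And>h m. x \<noteq> VCAS_CAS h m"
  shows "vcas_inv (setpc c p x)"
  using assms unfolding vcas_inv_def valid_node_def pending_node_def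
  by (auto split: if_splits)

lemma vcas_inv_cam_update [simp]: "vcas_inv (c\<lparr>cam := t\<rparr>) = vcas_inv c"
proof -
  have "vlist (c\<lparr>cam := t\<rparr>) = vlist c"
    by (rule vlist_cong) auto
  then show ?thesis
    unfolding vcas_inv_def valid_node_def pending_node_def by simp
qed

lemma vcas_inv_init_cas:
  assumes inv: "vcas_inv c" and pc: "pcs c p = Init_CAS n t k"
  defines "c' \<equiv> (setpc c p (cont n k))\<lparr>heap := (heap c)(n :=
             map_option (\<lambda>nd. if vts nd = None then nd\<lparr>vts := Some t\<rparr> else nd) (heap c n))\<rparr>"
  shows "vcas_inv c'"
proof -
  have n_in: "n \<in> vlist c"
    using vcas_inv_init_target_in_vlist[OF inv, of p] pc by simp
  then obtain nd where nd: "heap c n = Some nd"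
    using inv unfolding vcas_inv_def by blast
  define nd' where "nd' = (if vts nd = None then nd\<lparr>vts := Some t\<rparr> else nd)"
  have heap': "heap c' = (heap c)(n \<mapsto> nd')"
    using nd by (simp add: c'_def nd'_def)
  have "vts nd' \<noteq> None" "vnext nd' = vnext nd"
    by (simp_all add: nd'_def)
  then have valid': "valid_node c' x \<longleftrightarrow> valid_node c x \<or> x = n" for x
    using nd heap' unfolding valid_node_def by auto
  have vlist': "vlist c' = vlist c"
    by (rule vlist_cong) (simp_all add: c'_def heap' nd \<open>vnext nd' = vnext nd\<close>)
  have pending': "pending_node c' h m \<longleftrightarrow> pending_node c h m" if "m \<noteq> n" for h m
    using that heap' vlist' unfolding pending_node_def by simp
  have "m \<noteq> n" if "pcs c q = VCAS_CAS h m" for q h m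
    using inv that n_in unfolding vcas_inv_def pending_node_def by blast
  then show ?thesis
    using inv vlist' valid' pending' pc n_in unfolding vcas_inv_def
    by (simp add: c'_def)
qed

lemma vcas_inv_vcas_alloc:
  assumes inv: "vcas_inv c" and pc: "pcs c p = VCAS_Check ov nv h" and free: "heap c m = None"
  defines "c' \<equiv> (setpc c p (VCAS_CAS h m))\<lparr>heap := (heap c)(m \<mapsto>
             \<lparr>vval = nv, vnext = Some h, vts = None\<rparr>)\<rparr>"
  shows "vcas_inv c'"
proof -
  have m_notin: "m \<notin> vlist c"
    using inv free unfolding vcas_inv_def by blast
  have vlist': "vlist c' = vlist c"
    using m_notin by (intro vlist_cong) (auto simp: c'_def)
  have valid': "valid_node c' x \<longleftrightarrow> valid_node c x" for x
    using free unfolding valid_node_def by (simp add: c'_def)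
  have pending': "pending_node c' h' m' \<longleftrightarrow> pending_node c h' m'" if "m' \<noteq> m" for h' m'
    using that vlist' unfolding pending_node_def by (simp add: c'_def)
  have "valid_node c h"
    using inv pc unfolding vcas_inv_def by blast
  moreover have "m' \<noteq> m" if "pcs c q = VCAS_CAS h' m'" for q h' m'
  proof -
    have "pending_node c h' m'"
      using inv that unfolding vcas_inv_def by blast
    then show ?thesis
      using free unfolding pending_node_def by auto
  qed
  ultimately show ?thesis
    using inv vlist' valid' pending' m_notin free unfolding vcas_inv_def
    by (auto simp: c'_def pending_node_def)
qed

lemma vcas_inv_vcas_cas_ok:
  assumes inv: "vcas_inv c" and pc: "pcs c p = VCAS_CAS h m" and head: "vhead c = h"
  defines "c' \<equiv> (setpc c p (Init_ReadTS m AfterDone))\<lparr>vhead := m\<rparr>"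
  shows "vcas_inv c'"
proof -
  obtain nd where nd: "heap c m = Some nd" "vnext nd = Some (vhead c)" and m_notin: "m \<notin> vlist c"
    using inv pc head unfolding vcas_inv_def pending_node_def by blast
  have vlist': "vlist c' = insert m (vlist c)"
    using nd by (intro vlist_push) (simp_all add: c'_def)
  have "valid_node c h"
    using inv pc unfolding vcas_inv_def by blast
  moreover have "m' \<noteq> m" if "pcs c q = VCAS_CAS h' m'" "q \<noteq> p" for q h' m'
    using inv pc that unfolding vcas_inv_def by blast
  ultimately show ?thesis
    using inv vlist' nd m_notin head unfolding vcas_inv_def valid_node_def pending_node_def
    by (auto simp: c'_def)
qed

lemma vcas_inv_vcas_cas_fail:
  assumes inv: "vcas_inv c" and pc: "pcs c p = VCAS_CAS h m"
  defines "c' \<equiv> (setpc c p VCAS_FailRead)\<lparr>heap := (heap c)(m := None)\<rparr>"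
  shows "vcas_inv c'"
proof -
  have "pending_node c h m"
    using inv pc unfolding vcas_inv_def by blast
  then have m_invalid: "\<not> valid_node c m" and m_notin: "m \<notin> vlist c"
    unfolding valid_node_def pending_node_def by auto
  have vlist': "vlist c' = vlist c"
    using m_notin by (intro vlist_cong) (auto simp: c'_def)
  have valid': "valid_node c' x \<longleftrightarrow> valid_node c x" for x
    using m_invalid unfolding valid_node_def by (auto simp: c'_def)
  have pending': "pending_node c' h' m' \<longleftrightarrow> pending_node c h' m'" if "m' \<noteq> m" for h' m'
    using that vlist' unfolding pending_node_def by (simp add: c'_def)
  have "m' \<noteq> m" if "pcs c q = VCAS_CAS h' m'" "q \<noteq> p" for q h' m'
    using inv pc that unfolding vcas_inv_def by blast
  then show ?thesis
    using inv vlist' valid' pending' m_notin unfolding vcas_inv_def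
    by (auto simp: c'_def)
qed

lemma vcas_inv_step:
  assumes "pstep p c c'" and "vcas_inv c"
  shows "vcas_inv c'"
  using assms
proof (induction rule: pstep.induct)
  case (snap_cas_ok c p t)
  then show ?case
    using vcas_inv_setpc[where x = Idle] by simp
next
  case (head_read c p k)
  then show ?case
    by (intro vcas_inv_setpc) (auto intro: vlist.vl_head)
next
  case (init_valid c p n k)
  then have "n \<in> vlist c"
    using vcas_inv_init_target_in_vlist[of c p] by simp
  then have "valid_node c n"
    using init_valid unfolding vcas_inv_def valid_node_def by auto
  then show ?case
    using init_valid by (intro vcas_inv_setpc) auto
next
  case (init_tbd c p n k)
  then have "n \<in> vlist c"
    using vcas_inv_init_target_in_vlist[of c p] by simp
  then show ?case
    using init_tbd by (intro vcas_inv_setpc) auto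
next
  case (init_readcam c p n k)
  then have "n \<in> vlist c"
    using vcas_inv_init_target_in_vlist[of c p] by simp
  then show ?case
    using init_readcam by (intro vcas_inv_setpc) auto
next
  case (init_cas c p n t k)
  then show ?case
    by (intro vcas_inv_init_cas)
next
  case (vcas_alloc c p ov nv h m)
  then show ?case
    by (intro vcas_inv_vcas_alloc)
next
  case (vcas_cas_ok c p h m)
  then show ?case
    by (intro vcas_inv_vcas_cas_ok)
next
  case (vcas_cas_fail c p h m)
  then show ?case
    by (intro vcas_inv_vcas_cas_fail)
next
  case (vcas_failread c p)
  then show ?case
    by (intro vcas_inv_setpc) (auto intro: vlist.vl_head)
qed (intro vcas_inv_setpc; simp)+

lemma reach_vcas_inv: "reach c \<Longrightarrow> vcas_inv c"
  by (induction rule: reach.induct) (auto intro: vcas_inv_initial vcas_inv_step)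

theorem lemmaA3:
  fixes c :: "('p, 'v) conf"
  assumes "reach c"
    and "n \<in> vlist c"
    and "heap c n = Some nd"
    and "vts nd = None"
  shows "n = vhead c"
proof (rule ccontr)
  assume "n \<noteq> vhead c"
  then have "valid_node c n"
    using reach_vcas_inv[OF assms(1)] assms(2) unfolding vcas_inv_def by blast
  then show False
    using assms(3,4) unfolding valid_node_def by simp
qed

end
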